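(* Let $G$ be a subgroup of $\mathrm{Sp}(n,1)$ containing $d_n=\mathrm{diag}(1,\dots,1,i)$. Then for every $g\in\mathrm{Sp}(n,1)$, the set of traces of the elements of $gGg^{-1}$ is not contained in $\mathbb R$.
   Context: $\mathbb H$ denotes the quaternions, with units $i,j,k$. $\mathrm{Sp}(n,1)=\{A\in\mathrm{GL}(n+1,\mathbb H): A^*I_{n,1}A=I_{n,1}\}$ with $A^*$ the conjugate transpose and $I_{n,1}=\mathrm{diag}(1,\dots,1,-1)$. $d_n$ is the $(n+1)\times(n+1)$ diagonal matrix with diagonal entries $1,\dots,1,i$ (in this order). The trace of a quaternionic matrix is the sum of its diagonal entries. *)

theory Defs
  imports Main "HOL.Real"
begin

datatype quat = Quat (Re: real) (Im1: real) (Im2: real) (Im3: real)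

lemma quat_eq_iff: "x = y \<longleftrightarrow> Re x = Re y \<and> Im1 x = Im1 y \<and> Im2 x = Im2 y \<and> Im3 x = Im3 y"
  by (cases x; cases y) auto

instantiation quat :: ring_1
begin
definition "0 = Quat 0 0 0 0"
definition "1 = Quat 1 0 0 0"
definition "x + y = Quat (Re x + Re y) (Im1 x + Im1 y) (Im2 x + Im2 y) (Im3 x + Im3 y)"
definition "x - y = Quat (Re x - Re y) (Im1 x - Im1 y) (Im2 x - Im2 y) (Im3 x - Im3 y)"
definition "- x = Quat (- Re x) (- Im1 x) (- Im2 x) (- Im3 x)"
definition "x * y = Quat
   (Re x * Re y - Im1 x * Im1 y - Im2 x * Im2 y - Im3 x * Im3 y)
   (Re x * Im1 y + Im1 x * Re y + Im2 x * Im3 y - Im3 x * Im2 y)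
   (Re x * Im2 y - Im1 x * Im3 y + Im2 x * Re y + Im3 x * Im1 y)
   (Re x * Im3 y + Im1 x * Im2 y - Im2 x * Im1 y + Im3 x * Re y)"
instance
  by standard (simp_all add: quat_eq_iff zero_quat_def one_quat_def plus_quat_def
      minus_quat_def uminus_quat_def times_quat_def algebra_simps)
end

definition qi :: quat where "qi = Quat 0 1 0 0"
definition qj :: quat where "qj = Quat 0 0 1 0"
definition qk :: quat where "qk = Quat 0 0 0 1"
definition qcnj :: "quat \<Rightarrow> quat" where
  "qcnj x = Quat (Re x) (- Im1 x) (- Im2 x) (- Im3 x)"
definition qreal :: "real \<Rightarrow> quat" where "qreal r = Quat r 0 0 0"

text \<open>A matrix of size (n+1) x (n+1) is a function on indices 0..n, zero outside.\<close>
type_synonym qmat = "nat \<Rightarrow> nat \<Rightarrow> quat"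

definition is_qmat :: "nat \<Rightarrow> qmat \<Rightarrow> bool" where
  "is_qmat n A \<longleftrightarrow> (\<forall>i j. (n < i \<or> n < j) \<longrightarrow> A i j = 0)"

definition qmat_mult :: "nat \<Rightarrow> qmat \<Rightarrow> qmat \<Rightarrow> qmat" where
  "qmat_mult n A B = (\<lambda>i j. if i \<le> n \<and> j \<le> n then (\<Sum>k\<le>n. A i k * B k j) else 0)"

definition qmat_id :: "nat \<Rightarrow> qmat" where
  "qmat_id n = (\<lambda>i j. if i = j \<and> i \<le> n then 1 else 0)"

definition qmat_star :: "nat \<Rightarrow> qmat \<Rightarrow> qmat" where
  "qmat_star n A = (\<lambda>i j. if i \<le> n \<and> j \<le> n then qcnj (A j i) else 0)"

definition qmat_trace :: "nat \<Rightarrow> qmat \<Rightarrow> quat" where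
  "qmat_trace n A = (\<Sum>i\<le>n. A i i)"

definition qmat_invertible :: "nat \<Rightarrow> qmat \<Rightarrow> bool" where
  "qmat_invertible n A \<longleftrightarrow> (\<exists>B. is_qmat n B \<and> qmat_mult n A B = qmat_id n \<and> qmat_mult n B A = qmat_id n)"

definition qmat_inv :: "nat \<Rightarrow> qmat \<Rightarrow> qmat" where
  "qmat_inv n A = (SOME B. is_qmat n B \<and> qmat_mult n A B = qmat_id n \<and> qmat_mult n B A = qmat_id n)"

definition I_n1 :: "nat \<Rightarrow> qmat" where
  "I_n1 n = (\<lambda>i j. if i = j \<and> i < n then 1 else if i = j \<and> i = n then -1 else 0)"

definition d_mat :: "nat \<Rightarrow> qmat" where
  "d_mat n = (\<lambda>i j. if i = j \<and> i < n then 1 else if i = j \<and> i = n then qi else 0)"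

definition Sp_n1 :: "nat \<Rightarrow> qmat set" where
  "Sp_n1 n = {A. is_qmat n A \<and> qmat_invertible n A \<and>
      qmat_mult n (qmat_star n A) (qmat_mult n (I_n1 n) A) = I_n1 n}"

definition is_subgroup_Sp :: "nat \<Rightarrow> qmat set \<Rightarrow> bool" where
  "is_subgroup_Sp n G \<longleftrightarrow> G \<subseteq> Sp_n1 n \<and> qmat_id n \<in> G \<and>
     (\<forall>A\<in>G. \<forall>B\<in>G. qmat_mult n A B \<in> G) \<and> (\<forall>A\<in>G. qmat_inv n A \<in> G)"

definition qconj_set :: "nat \<Rightarrow> qmat \<Rightarrow> qmat set \<Rightarrow> qmat set" where
  "qconj_set n g G = (\<lambda>h. qmat_mult n (qmat_mult n g h) (qmat_inv n g)) ` G"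

end

theory Submission
  imports Defs
begin

text \<open>
  For g in Sp(n,1) the inverse is I g* I, so with q_i = g i n and s_i the diagonal entries of
  I = I_{n,1} the trace of g d_n g^-1 is a real number minus the sum of s_i q_i i q_i*.
  The real-linear functional x \<mapsto> Im1 (m* x m) with m = g n n vanishes on real quaternions,
  is at most |m|^2 |q|^2 on q i q* and equals |m|^4 on m i m*.  Together with the relation
  \<Sum>_{i<n} |q_i|^2 - |m|^2 = -1 coming from g* I g = I, this functional takes a value
  \<ge> |m|^2 \<ge> 1 on the trace, which therefore is not real.
\<close>

lemmas quat_defs = zero_quat_def one_quat_def plus_quat_def minus_quat_def uminus_quat_def
  times_quat_def qcnj_def qreal_def qi_def

definition qnormsq :: "quat \<Rightarrow> real" where
  "qnormsq q = (Re q)\<^sup>2 + (Im1 q)\<^sup>2 + (Im2 q)\<^sup>2 + (Im3 q)\<^sup>2"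

lemma qnormsq_nonneg: "qnormsq q \<ge> 0"
  by (simp add: qnormsq_def)

lemma Re_sum: "Re (sum f A) = (\<Sum>x\<in>A. Re (f x))"
  by (induct A rule: infinite_finite_induct) (simp_all add: quat_defs)

lemma Im1_sum: "Im1 (sum f A) = (\<Sum>x\<in>A. Im1 (f x))"
  by (induct A rule: infinite_finite_induct) (simp_all add: quat_defs)

lemma qreal_0: "qreal 0 = 0"
  by (simp add: quat_defs)

lemma qreal_add: "qreal (a + b) = qreal a + qreal b"
  by (simp add: quat_defs)

lemma qreal_sum: "qreal (sum f A) = (\<Sum>x\<in>A. qreal (f x))"
  by (induct A rule: infinite_finite_induct) (simp_all add: qreal_0 qreal_add)

lemma qcnj_mult: "qcnj (x * y) = qcnj y * qcnj x"
  by (simp add: quat_defs quat_eq_iff algebra_simps)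

lemma qcnj_qcnj [simp]: "qcnj (qcnj x) = x"
  by (simp add: quat_defs quat_eq_iff)

lemma mult_qcnj_self: "x * qcnj x = qreal (qnormsq x)"
  by (simp add: quat_defs qnormsq_def quat_eq_iff power2_eq_square)

lemma qnormsq_mult: "qnormsq (x * y) = qnormsq x * qnormsq y"
  by (simp add: quat_defs qnormsq_def power2_eq_square algebra_simps)

lemma qnormsq_qcnj: "qnormsq (qcnj x) = qnormsq x"
  by (simp add: qnormsq_def qcnj_def)

lemma qcnj_mult_self: "qcnj x * x = qreal (qnormsq x)"
  using mult_qcnj_self[of "qcnj x"] by (simp add: qnormsq_qcnj)

lemma Re_qcnj_scaled_self: "Re (qcnj q * (qreal s * q)) = s * qnormsq q"
  by (simp add: quat_defs qnormsq_def power2_eq_square algebra_simps)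

lemma Im1_rotate_qi: "Im1 (p * qi * qcnj p) = (Re p)\<^sup>2 + (Im1 p)\<^sup>2 - (Im2 p)\<^sup>2 - (Im3 p)\<^sup>2"
  by (simp add: quat_defs power2_eq_square algebra_simps)

definition sandwich_Im1 :: "quat \<Rightarrow> quat \<Rightarrow> real" where
  "sandwich_Im1 m x = Im1 (qcnj m * x * m)"

lemma sandwich_Im1_qreal [simp]: "sandwich_Im1 m (qreal a) = 0"
  by (simp add: sandwich_Im1_def quat_defs algebra_simps)

lemma sandwich_Im1_diff: "sandwich_Im1 m (x - y) = sandwich_Im1 m x - sandwich_Im1 m y"
  by (simp add: sandwich_Im1_def quat_defs algebra_simps)

lemma sandwich_Im1_mult_qreal: "sandwich_Im1 m (x * qreal c) = c * sandwich_Im1 m x"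
  by (simp add: sandwich_Im1_def quat_defs algebra_simps)

lemma sandwich_Im1_sum: "sandwich_Im1 m (sum f A) = (\<Sum>x\<in>A. sandwich_Im1 m (f x))"
  by (simp add: sandwich_Im1_def sum_distrib_left sum_distrib_right Im1_sum)

lemma sandwich_Im1_rotate_le: "sandwich_Im1 m (q * qi * qcnj q) \<le> qnormsq m * qnormsq q"
proof -
  define p where "p = qcnj m * q"
  have "qcnj m * (q * qi * qcnj q) * m = p * qi * qcnj p"
    by (simp add: p_def qcnj_mult mult.assoc)
  moreover have "qnormsq p = qnormsq m * qnormsq q"
    by (simp add: p_def qnormsq_mult qnormsq_qcnj)
  moreover have "(Re p)\<^sup>2 + (Im1 p)\<^sup>2 - (Im2 p)\<^sup>2 - (Im3 p)\<^sup>2 \<le> qnormsq p"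
    by (simp add: qnormsq_def)
  ultimately show ?thesis
    by (simp add: sandwich_Im1_def Im1_rotate_qi)
qed

lemma sandwich_Im1_rotate_self: "sandwich_Im1 m (m * qi * qcnj m) = (qnormsq m)\<^sup>2"
proof -
  have "qcnj m * (m * qi * qcnj m) * m = (qcnj m * m) * qi * (qcnj m * m)"
    by (simp add: mult.assoc)
  then show ?thesis
    unfolding sandwich_Im1_def qcnj_mult_self by (simp add: quat_defs power2_eq_square)
qed

lemma qmat_mult_assoc: "qmat_mult n (qmat_mult n A B) C = qmat_mult n A (qmat_mult n B C)"
proof (intro ext)
  fix i j
  show "qmat_mult n (qmat_mult n A B) C i j = qmat_mult n A (qmat_mult n B C) i j"
  proof (cases "i \<le> n \<and> j \<le> n")
    case True
    have "qmat_mult n (qmat_mult n A B) C i j = (\<Sum>k\<le>n. (\<Sum>m\<le>n. A i m * B m k) * C k j)"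
      using True unfolding qmat_mult_def by (auto intro!: sum.cong)
    also have "\<dots> = (\<Sum>k\<le>n. \<Sum>m\<le>n. A i m * (B m k * C k j))"
      by (simp add: sum_distrib_right mult.assoc)
    also have "\<dots> = (\<Sum>m\<le>n. \<Sum>k\<le>n. A i m * (B m k * C k j))"
      by (rule sum.swap)
    also have "\<dots> = qmat_mult n A (qmat_mult n B C) i j"
      using True unfolding qmat_mult_def by (auto simp: sum_distrib_left intro!: sum.cong)
    finally show ?thesis .
  qed (auto simp: qmat_mult_def)
qed

lemma sum_eq_single_nonzero:
  "finite A \<Longrightarrow> j \<in> A \<Longrightarrow> (\<And>k. k \<in> A \<Longrightarrow> k \<noteq> j \<Longrightarrow> f k = 0) \<Longrightarrow> sum f A = f j"
  by (simp add: sum.remove sum.neutral)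

lemma qmat_mult_diag_right:
  assumes "\<And>a b. a \<noteq> b \<Longrightarrow> D a b = 0" "i \<le> n" "k \<le> n"
  shows "qmat_mult n A D i k = A i k * D k k"
  using assms by (simp add: qmat_mult_def sum_eq_single_nonzero[of "{..n}" k])

lemma qmat_mult_diag_left:
  assumes "\<And>a b. a \<noteq> b \<Longrightarrow> D a b = 0" "i \<le> n" "k \<le> n"
  shows "qmat_mult n D A i k = D i i * A i k"
  using assms by (simp add: qmat_mult_def sum_eq_single_nonzero[of "{..n}" i])

lemma qmat_mult_id_right:
  assumes "is_qmat n A"
  shows "qmat_mult n A (qmat_id n) = A"
proof (intro ext)
  fix i j
  show "qmat_mult n A (qmat_id n) i j = A i j"
    using assms by (cases "i \<le> n \<and> j \<le> n")
      (auto simp: qmat_mult_def qmat_id_def is_qmat_def sum_eq_single_nonzero[of "{..n}" j])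
qed

lemma qmat_mult_id_left:
  assumes "is_qmat n A"
  shows "qmat_mult n (qmat_id n) A = A"
proof (intro ext)
  fix i j
  show "qmat_mult n (qmat_id n) A i j = A i j"
    using assms by (cases "i \<le> n \<and> j \<le> n")
      (auto simp: qmat_mult_def qmat_id_def is_qmat_def sum_eq_single_nonzero[of "{..n}" i])
qed

lemma qmat_inv_eq_left_inverse:
  assumes "qmat_invertible n g" "is_qmat n B" "qmat_mult n B g = qmat_id n"
  shows "qmat_inv n g = B"
proof -
  have inv: "is_qmat n (qmat_inv n g) \<and> qmat_mult n g (qmat_inv n g) = qmat_id n"
    using assms(1) unfolding qmat_inv_def qmat_invertible_def by (metis (mono_tags, lifting) someI_ex)
  have "B = qmat_mult n (qmat_mult n B g) (qmat_inv n g)"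
    using inv assms(2) by (simp add: qmat_mult_assoc qmat_mult_id_right)
  then show ?thesis
    using inv assms(3) by (simp add: qmat_mult_id_left)
qed

definition I_n1_sign :: "nat \<Rightarrow> nat \<Rightarrow> real" where
  "I_n1_sign n k = (if k < n then 1 else -1)"

lemma I_n1_diag: "k \<le> n \<Longrightarrow> I_n1 n k k = qreal (I_n1_sign n k)"
  by (auto simp: I_n1_def I_n1_sign_def quat_defs)

lemma I_n1_off_diag: "a \<noteq> b \<Longrightarrow> I_n1 n a b = 0"
  by (simp add: I_n1_def)

definition Sp_inv :: "nat \<Rightarrow> qmat \<Rightarrow> qmat" where
  "Sp_inv n g = (\<lambda>j k. if j \<le> n \<and> k \<le> n
      then qreal (I_n1_sign n j) * qcnj (g k j) * qreal (I_n1_sign n k) else 0)"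

lemma Sp_n1_entry:
  assumes "g \<in> Sp_n1 n" "j \<le> n" "l \<le> n"
  shows "(\<Sum>k\<le>n. qcnj (g k j) * (qreal (I_n1_sign n k) * g k l)) = I_n1 n j l"
proof -
  have "qmat_mult n (qmat_star n g) (qmat_mult n (I_n1 n) g) j l
      = (\<Sum>k\<le>n. qcnj (g k j) * (qreal (I_n1_sign n k) * g k l))"
    using assms(2,3) unfolding qmat_mult_def[of n "qmat_star n g"]
    by (auto intro!: sum.cong simp: qmat_star_def qmat_mult_diag_left[OF I_n1_off_diag] I_n1_diag)
  with assms(1) show ?thesis
    by (simp add: Sp_n1_def)
qed

lemma Sp_n1_last_column:
  assumes "g \<in> Sp_n1 n"
  shows "(\<Sum>k<n. qnormsq (g k n)) - qnormsq (g n n) = -1"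
proof -
  have "(\<Sum>k\<le>n. Re (qcnj (g k n) * (qreal (I_n1_sign n k) * g k n))) = Re (I_n1 n n n)"
    using Sp_n1_entry[OF assms order.refl order.refl] by (simp flip: Re_sum)
  also have "\<dots> = -1"
    by (simp add: I_n1_def quat_defs)
  finally show ?thesis
    by (simp add: Re_qcnj_scaled_self lessThan_Suc_atMost[symmetric] I_n1_sign_def)
qed

lemma Sp_inv_mult_left:
  assumes "g \<in> Sp_n1 n"
  shows "qmat_mult n (Sp_inv n g) g = qmat_id n"
proof (intro ext)
  fix j l
  show "qmat_mult n (Sp_inv n g) g j l = qmat_id n j l"
  proof (cases "j \<le> n \<and> l \<le> n")
    case True
    have "qmat_mult n (Sp_inv n g) g j l
        = qreal (I_n1_sign n j) * (\<Sum>k\<le>n. qcnj (g k j) * (qreal (I_n1_sign n k) * g k l))"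
      using True unfolding qmat_mult_def Sp_inv_def
      by (auto simp: sum_distrib_left mult.assoc intro!: sum.cong)
    also have "\<dots> = qreal (I_n1_sign n j) * I_n1 n j l"
      using True by (simp add: Sp_n1_entry[OF assms])
    also have "\<dots> = qmat_id n j l"
      using True by (auto simp: I_n1_def qmat_id_def I_n1_sign_def quat_defs)
    finally show ?thesis .
  qed (auto simp: qmat_mult_def qmat_id_def)
qed

lemma Sp_n1_qmat_inv:
  assumes "g \<in> Sp_n1 n"
  shows "qmat_inv n g = Sp_inv n g"
  using assms Sp_inv_mult_left[OF assms]
  by (intro qmat_inv_eq_left_inverse) (auto simp: Sp_n1_def is_qmat_def Sp_inv_def)

lemma trace_conj_d_mat:
  "qmat_trace n (qmat_mult n (qmat_mult n g (d_mat n)) (Sp_inv n g))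
     = (\<Sum>i\<le>n. qreal (I_n1_sign n i * (\<Sum>k<n. qnormsq (g i k)))
                 - g i n * qi * qcnj (g i n) * qreal (I_n1_sign n i))"
proof -
  have d_off_diag: "\<And>a b. a \<noteq> b \<Longrightarrow> d_mat n a b = 0"
    by (simp add: d_mat_def)
  have real_col: "g i k * d_mat n k k * Sp_inv n g k i
      = qreal (I_n1_sign n i * qnormsq (g i k))" if "i \<le> n" "k < n" for i k
    using that by (simp add: d_mat_def Sp_inv_def I_n1_sign_def quat_defs quat_eq_iff
        qnormsq_def power2_eq_square algebra_simps)
  have last_col: "g i n * d_mat n n n * Sp_inv n g n i
      = - (g i n * qi * qcnj (g i n) * qreal (I_n1_sign n i))" if "i \<le> n" for i
    using that by (simp add: d_mat_def Sp_inv_def I_n1_sign_def quat_defs quat_eq_iff algebra_simps)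
  have "qmat_mult n (qmat_mult n g (d_mat n)) (Sp_inv n g) i i
      = (\<Sum>k<n. g i k * d_mat n k k * Sp_inv n g k i) + g i n * d_mat n n n * Sp_inv n g n i"
    if "i \<le> n" for i
    using that unfolding qmat_mult_def[of n "qmat_mult n g (d_mat n)"]
    by (auto simp: qmat_mult_diag_right[OF d_off_diag] lessThan_Suc_atMost[symmetric])
  then show ?thesis
    unfolding qmat_trace_def
    by (intro sum.cong) (simp_all add: real_col last_col qreal_sum sum_distrib_left)
qed

lemma Sp_n1_corner_ge_1:
  assumes "g \<in> Sp_n1 n"
  shows "qnormsq (g n n) \<ge> 1"
  using Sp_n1_last_column[OF assms] sum_nonneg[of "{..<n}" "\<lambda>k. qnormsq (g k n)"]
  by (simp add: qnormsq_nonneg)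

lemma sandwich_Im1_trace_conj_d_mat:
  assumes "g \<in> Sp_n1 n"
  shows "sandwich_Im1 (g n n) (qmat_trace n (qmat_mult n (qmat_mult n g (d_mat n)) (Sp_inv n g)))
           \<ge> qnormsq (g n n)"
proof -
  define m where "m = g n n"
  define P where "P i = sandwich_Im1 m (g i n * qi * qcnj (g i n))" for i
  have "sandwich_Im1 m (qmat_trace n (qmat_mult n (qmat_mult n g (d_mat n)) (Sp_inv n g)))
      = (\<Sum>i\<le>n. - I_n1_sign n i * P i)"
    by (simp add: trace_conj_d_mat sandwich_Im1_sum sandwich_Im1_diff sandwich_Im1_mult_qreal P_def)
  also have "\<dots> = (\<Sum>i<n. - P i) + P n"
    by (simp add: I_n1_sign_def lessThan_Suc_atMost[symmetric])
  also have "\<dots> \<ge> (\<Sum>i<n. - (qnormsq m * qnormsq (g i n))) + (qnormsq m)\<^sup>2"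
    using sandwich_Im1_rotate_le sandwich_Im1_rotate_self
    by (auto simp: P_def m_def intro!: sum_mono)
  moreover have "(\<Sum>i<n. - (qnormsq m * qnormsq (g i n))) + (qnormsq m)\<^sup>2 = qnormsq m"
  proof -
    define S where "S = (\<Sum>i<n. qnormsq (g i n))"
    have "qnormsq m = 1 + S"
      using Sp_n1_last_column[OF assms] by (simp add: m_def S_def)
    moreover have "(\<Sum>i<n. - (qnormsq m * qnormsq (g i n))) = - (qnormsq m * S)"
      by (simp add: S_def sum_negf sum_distrib_left)
    ultimately show ?thesis
      by (simp add: power2_eq_square algebra_simps)
  qed
  ultimately show ?thesis
    by (simp add: m_def)
qed

theorem proposition4p10:
  fixes n :: nat and G :: "qmat set"
  assumes "is_subgroup_Sp n G" and "d_mat n \<in> G"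
  shows "\<forall>g\<in>Sp_n1 n. \<not> (qmat_trace n ` qconj_set n g G \<subseteq> range qreal)"
proof (intro ballI notI)
  fix g assume g: "g \<in> Sp_n1 n" and real_traces: "qmat_trace n ` qconj_set n g G \<subseteq> range qreal"
  have "qmat_mult n (qmat_mult n g (d_mat n)) (Sp_inv n g) \<in> qconj_set n g G"
    using assms(2) by (auto simp: qconj_set_def Sp_n1_qmat_inv[OF g])
  with real_traces have "qmat_trace n (qmat_mult n (qmat_mult n g (d_mat n)) (Sp_inv n g)) \<in> range qreal"
    by blast
  moreover have "sandwich_Im1 (g n n) (qmat_trace n (qmat_mult n (qmat_mult n g (d_mat n)) (Sp_inv n g))) > 0"
    using sandwich_Im1_trace_conj_d_mat[OF g] Sp_n1_corner_ge_1[OF g] by linarith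
  ultimately show False
    by auto
qed

end
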